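(* For a positive integer $k$, let $\mathcal{H}'_k$ be the random hypergraph with vertex set $[\lceil k\log k\rceil]$ whose edges are $k$ sets $e_1,\dots,e_k$, each chosen independently and uniformly at random from the $k$-element subsets of $[\lceil k\log k\rceil]$. Then, with probability tending to $1$ as $k\to\infty$, for every set $X\subseteq[\lceil k\log k\rceil]$ of size $\lfloor\log^2k-10\log k\log\log k\rfloor$ there are at least $\frac{\log^9 k}{2}$ indices $j$ with $e_j\cap X=\emptyset$.
   Context: $\log$ denotes the natural logarithm; $[m]=\{1,\dots,m\}$. *)

theory Defs
  imports "HOL-Probability.Probability"
begin

definition nverts :: "nat \<Rightarrow> nat" where
  "nverts k = nat \<lceil>real k * ln (real k)\<rceil>"

definition ksubsets :: "nat \<Rightarrow> nat set set" where
  "ksubsets k = {A. A \<subseteq> {1..nverts k} \<and> card A = k}"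

(* H'_k: edges e_1..e_k chosen independently and uniformly from ksubsets k;
   an outcome is the edge family j \<mapsto> e_j, j \<in> {1..k} (value {} outside) *)
definition Hk :: "nat \<Rightarrow> (nat \<Rightarrow> nat set) pmf" where
  "Hk k = Pi_pmf {1..k} {} (\<lambda>_. pmf_of_set (ksubsets k))"

definition xsize :: "nat \<Rightarrow> nat" where
  "xsize k = nat \<lfloor>(ln (real k))^2 - 10 * ln (real k) * ln (ln (real k))\<rfloor>"

definition good :: "nat \<Rightarrow> (nat \<Rightarrow> nat set) \<Rightarrow> bool" where
  "good k e \<longleftrightarrow> (\<forall>X. X \<subseteq> {1..nverts k} \<and> card X = xsize k \<longrightarrow>
      real (card {j \<in> {1..k}. e j \<inter> X = {}}) \<ge> (ln (real k))^9 / 2)"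

end

theory Submission
  imports Defs "HOL-Real_Asymp.Real_Asymp"
begin

(* Fix X of size s \<approx> log^2 k - 10 log k log log k. A uniform k-subset of [n], n \<approx> k log k, avoids X
   with probability p \<ge> exp(-k s/(n-k-s)), so the number of edges avoiding X is binomial with
   mean k p, which is of order log^10 k. A Chernoff bound makes fewer than log^9 k / 2 such edges
   occur with probability at most exp(log^9 k / 2 - k p / 2), and this beats the union bound over the
   at most n^s = exp(O(log^3 k)) choices of X. *)

lemma prob_pmf_Collect_not: "measure_pmf.prob q {x. \<not> P x} = 1 - measure_pmf.prob q {x. P x}"
  using measure_pmf.prob_compl[of "{x. P x}" q] by (simp add: Compl_eq_Diff_UNIV[symmetric] Collect_neg_eq)

lemma map_pmf_eq_bernoulli_pmf:
  fixes q :: "'a pmf"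
  shows "map_pmf Q q = bernoulli_pmf (measure_pmf.prob q {x. Q x})"
proof (rule pmf_eqI)
  fix b :: bool
  show "pmf (map_pmf Q q) b = pmf (bernoulli_pmf (measure_pmf.prob q {x. Q x})) b"
    by (cases b) (simp_all add: pmf_map vimage_def prob_pmf_Collect_not)
qed

lemma Pi_pmf_card_eq_binomial_pmf:
  fixes q :: "'a pmf"
  assumes "finite A"
  shows "map_pmf (\<lambda>e. card {j\<in>A. Q (e j)}) (Pi_pmf A d (\<lambda>_. q))
       = binomial_pmf (card A) (measure_pmf.prob q {x. Q x})"
proof -
  let ?p = "measure_pmf.prob q {x. Q x}"
  have "binomial_pmf (card A) ?p = map_pmf (\<lambda>f. card {x\<in>A. f x}) (Pi_pmf A (Q d) (\<lambda>_. bernoulli_pmf ?p))"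
    by (rule binomial_pmf_altdef') (use assms in auto)
  also have "Pi_pmf A (Q d) (\<lambda>_. bernoulli_pmf ?p) = map_pmf (\<lambda>h. Q \<circ> h) (Pi_pmf A d (\<lambda>_. q))"
    unfolding map_pmf_eq_bernoulli_pmf[symmetric] by (rule Pi_pmf_map) (use assms in auto)
  finally show ?thesis by (simp add: pmf.map_comp o_def)
qed

(* Chernoff's argument: weight the event {i \<le> m} by z^i / z^m \<ge> 1, for 0 < z \<le> 1. *)
lemma prob_binomial_pmf_le_powr:
  assumes p: "0 \<le> p" "p \<le> 1" and z: "0 < z" "z \<le> 1"
  shows "measure_pmf.prob (binomial_pmf n p) {i. real i \<le> m} \<le> (1 - p * (1 - z)) ^ n / z powr m"
proof -
  let ?f = "\<lambda>i. pmf (binomial_pmf n p) i * (z ^ i / z powr m)"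
  have fin: "finite {i::nat. real i \<le> m}"
    by (rule finite_subset[of _ "{..nat \<lceil>m\<rceil>}"]) (auto, linarith)
  have "measure_pmf.prob (binomial_pmf n p) {i. real i \<le> m} = (\<Sum>i\<in>{i. real i \<le> m}. pmf (binomial_pmf n p) i)"
    using fin by (rule measure_measure_pmf_finite)
  also have "\<dots> \<le> (\<Sum>i\<in>{i. real i \<le> m}. ?f i)"
  proof (rule sum_mono)
    fix i assume i: "i \<in> {i. real i \<le> m}"
    have "z powr m \<le> z powr (real i)"
      using i z by (intro powr_mono') auto
    also have "\<dots> = z ^ i" using z by (simp add: powr_realpow)
    finally have "1 \<le> z ^ i / z powr m" using z by simp
    then show "pmf (binomial_pmf n p) i \<le> ?f i"
      by (metis mult.right_neutral mult_left_mono pmf_nonneg)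
  qed
  also have "\<dots> = (\<Sum>i\<in>{i. real i \<le> m} \<inter> {..n}. ?f i)"
    using fin by (intro sum.mono_neutral_right) (auto simp: p)
  also have "\<dots> \<le> (\<Sum>i\<le>n. ?f i)"
    using z by (intro sum_mono2) auto
  also have "\<dots> = (\<Sum>i\<le>n. of_nat (n choose i) * (p * z) ^ i * (1 - p) ^ (n - i)) / z powr m"
    using p by (simp add: sum_divide_distrib power_mult_distrib field_simps)
  also have "\<dots> = (p * z + (1 - p)) ^ n / z powr m"
    by (simp add: binomial_ring)
  finally show ?thesis by (simp add: algebra_simps)
qed

lemma prob_binomial_pmf_le_exp:
  assumes "0 \<le> p" "p \<le> 1"
  shows "measure_pmf.prob (binomial_pmf n p) {i. real i \<le> m} \<le> exp (m - real n * p / 2)"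
proof -
  define z :: real where "z = exp (-1)"
  have z: "0 < z" "z \<le> 1" "1/2 \<le> 1 - z" unfolding z_def
    using exp_ge_add_one_self[of 1] by (auto simp: exp_minus field_simps)
  have "(1 - p * (1 - z)) ^ n \<le> exp (- (p * (1 - z))) ^ n"
    using assms z exp_ge_add_one_self[of "- (p * (1 - z))"] by (intro power_mono) (auto simp: mult_le_one)
  also have "\<dots> = exp (- (real n * p * (1 - z)))"
    by (simp add: exp_of_nat_mult[symmetric] algebra_simps)
  also have "\<dots> \<le> exp (- (real n * p / 2))"
    using assms z mult_left_mono[OF z(3), of "real n * p"] by simp
  finally have "(1 - p * (1 - z)) ^ n / z powr m \<le> exp (- (real n * p / 2)) / exp (- m)"
    by (simp add: z_def powr_def divide_right_mono)
  also have "\<dots> = exp (m - real n * p / 2)"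
    by (simp add: exp_diff[symmetric])
  finally show ?thesis
    using prob_binomial_pmf_le_powr[OF assms z(1,2), of n m] by linarith
qed

lemma Suc_times_binomial_eq_diff_times: "Suc k * (n choose Suc k) = (n - k) * (n choose k)"
  using binomial_absorption[of k n] binomial_absorb_comp[of n k] by simp

lemma binomial_diff_ge:
  assumes "s + K \<le> N" "k \<le> K" "K < N"
  shows "real (N choose k) * (1 - real s / (real N - real K)) ^ k \<le> real (N - s choose k)"
  using assms(2)
proof (induction k)
  case 0 then show ?case by simp
next
  case (Suc k)
  let ?x = "real s / (real N - real K)"
  have NK: "real N - real K > 0" using assms by simp
  have x1: "0 \<le> 1 - ?x" using assms NK by (simp add: field_simps)
  have IH: "real (N choose k) * (1 - ?x) ^ k \<le> real (N - s choose k)" using Suc by simp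
  have step: "real (N - k) * (1 - ?x) \<le> real (N - s - k)"
  proof -
    have "real s * 1 \<le> real s * ((real N - real k) / (real N - real K))"
      using NK Suc by (intro mult_left_mono) (auto simp: le_divide_eq)
    then show ?thesis using assms Suc NK by (simp add: of_nat_diff field_simps)
  qed
  have binomial_Suc: "real (n choose Suc k) * real (Suc k) = real (n choose k) * real (n - k)" for n
    using arg_cong[OF Suc_times_binomial_eq_diff_times[of k n], of real] by (simp only: of_nat_mult mult.commute)
  have "real (N choose Suc k) * (1 - ?x) ^ Suc k * real (Suc k)
      = (real (N choose Suc k) * real (Suc k)) * (1 - ?x) ^ k * (1 - ?x)"
    by (simp add: mult_ac del: of_nat_Suc)
  also have "\<dots> = real (N choose k) * (1 - ?x) ^ k * (real (N - k) * (1 - ?x))"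
    by (subst binomial_Suc) (simp only: mult_ac)
  also have "\<dots> \<le> real (N - s choose k) * real (N - s - k)"
    using IH step x1 by (intro mult_mono) auto
  also have "\<dots> = real (N - s choose Suc k) * real (Suc k)"
    by (simp only: binomial_Suc)
  finally show ?case by (simp del: of_nat_Suc)
qed

lemma exp_neg_div_one_minus_le:
  fixes x :: real assumes "0 \<le> x" "x < 1"
  shows "exp (- (x / (1 - x))) \<le> 1 - x"
proof -
  have "1 / (1 - x) = 1 + x / (1 - x)" using assms by (simp add: field_simps)
  also have "\<dots> \<le> exp (x / (1 - x))" by (rule exp_ge_add_one_self)
  finally show ?thesis using assms by (simp add: exp_minus field_simps)
qed

lemma binomial_le_exp_mult_ln:
  assumes "0 < n"
  shows "real (n choose s) \<le> exp (real s * ln (real n))"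
proof (cases "s \<le> n")
  case True
  then have "real (n choose s) \<le> real n ^ s"
    by (metis binomial_le_pow of_nat_le_iff of_nat_power)
  also have "\<dots> = exp (real s * ln (real n))"
    using assms by (subst exp_of_nat_mult) auto
  finally show ?thesis .
qed (simp add: binomial_eq_0)

lemma prob_pmf_of_set_subsets_disjoint:
  assumes "finite V" "X \<subseteq> V" "k \<le> card V"
  shows "measure_pmf.prob (pmf_of_set {A. A \<subseteq> V \<and> card A = k}) {A. A \<inter> X = {}}
       = real (card V - card X choose k) / real (card V choose k)"
proof -
  let ?S = "{A. A \<subseteq> V \<and> card A = k}"
  have card_S: "card ?S = card V choose k" using n_subsets[OF assms(1)] by simp
  have "finite ?S" by (rule finite_subset[of _ "Pow V"]) (use assms(1) in auto)
  moreover have "?S \<noteq> {}" using card_S assms(3) by (metis card.empty zero_less_binomial_iff less_irrefl)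
  moreover have "?S \<inter> {A. A \<inter> X = {}} = {A. A \<subseteq> V - X \<and> card A = k}" by auto
  moreover have "card (V - X) = card V - card X" using assms by (simp add: card_Diff_subset finite_subset)
  ultimately show ?thesis using n_subsets[of "V - X" k] assms(1) card_S by (simp add: measure_pmf_of_set)
qed

lemma prob_pmf_of_set_subsets_disjoint_ge:
  assumes "finite V" "X \<subseteq> V" "card X + k < card V"
  shows "exp (- real k * card X / (card V - real k - card X))
       \<le> measure_pmf.prob (pmf_of_set {A. A \<subseteq> V \<and> card A = k}) {A. A \<inter> X = {}}"
proof -
  let ?x = "real (card X) / (card V - real k)"
  have x: "0 \<le> ?x" "?x < 1" using assms(3) by (auto simp: field_simps)
  have nonzero: "card V - real k \<noteq> 0" "card V - real k - card X \<noteq> 0" using assms(3) by auto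
  then have "1 - ?x = (card V - real k - card X) / (card V - real k)"
    by (simp add: field_simps)
  then have ratio: "?x / (1 - ?x) = card X / (card V - real k - card X)"
    using nonzero by simp
  have "exp (- real k * card X / (card V - real k - card X)) = exp (- (?x / (1 - ?x))) ^ k"
    unfolding ratio by (simp add: exp_of_nat_mult[symmetric])
  also have "\<dots> \<le> (1 - ?x) ^ k"
    using exp_neg_div_one_minus_le[OF x] by (intro power_mono) auto
  also have "\<dots> \<le> real (card V - card X choose k) / real (card V choose k)"
    using binomial_diff_ge[of "card X" k "card V" k] assms(3) by (simp add: field_simps)
  also have "\<dots> = measure_pmf.prob (pmf_of_set {A. A \<subseteq> V \<and> card A = k}) {A. A \<inter> X = {}}"
    using assms by (simp add: prob_pmf_of_set_subsets_disjoint)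
  finally show ?thesis .
qed

lemma prob_Hk_few_disjoint_le:
  assumes "X \<subseteq> {1..nverts k}" "card X + k < nverts k"
  shows "measure_pmf.prob (Hk k) {e. real (card {j\<in>{1..k}. e j \<inter> X = {}}) \<le> m}
       \<le> exp (m - real k * exp (- real k * card X / (nverts k - real k - card X)) / 2)"
proof -
  let ?p = "measure_pmf.prob (pmf_of_set (ksubsets k)) {A. A \<inter> X = {}}"
  let ?avoiding = "\<lambda>e. card {j\<in>{1..k}. e j \<inter> X = {}}"
  have "measure_pmf.prob (Hk k) {e. real (?avoiding e) \<le> m}
      = measure_pmf.prob (map_pmf ?avoiding (Hk k)) {i. real i \<le> m}"
    by (simp add: vimage_def)
  also have "map_pmf ?avoiding (Hk k) = binomial_pmf k ?p"
    unfolding Hk_def using Pi_pmf_card_eq_binomial_pmf[of "{1..k}" "\<lambda>A. A \<inter> X = {}" "{}"] by simp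
  also have "measure_pmf.prob (binomial_pmf k ?p) {i. real i \<le> m} \<le> exp (m - real k * ?p / 2)"
    by (rule prob_binomial_pmf_le_exp) auto
  also have "\<dots> \<le> exp (m - real k * exp (- real k * card X / (nverts k - real k - card X)) / 2)"
    using prob_pmf_of_set_subsets_disjoint_ge[of "{1..nverts k}" X k] assms
    by (simp add: ksubsets_def mult_left_mono)
  finally show ?thesis .
qed

lemma prob_not_good_le:
  fixes k :: nat
  defines "n \<equiv> nverts k" and "s \<equiv> xsize k"
  assumes "s + k < n"
  shows "measure_pmf.prob (Hk k) {e. \<not> good k e}
       \<le> real (n choose s) * exp ((ln (real k))^9 / 2 - real k * exp (- real k * s / (n - real k - s)) / 2)"
proof -
  define Xs where "Xs = {X. X \<subseteq> {1..n} \<and> card X = s}"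
  define few where "few X = {e :: nat \<Rightarrow> nat set. real (card {j\<in>{1..k}. e j \<inter> X = {}}) \<le> (ln (real k))^9 / 2}" for X
  have "finite Xs" unfolding Xs_def by (rule finite_subset[of _ "Pow {1..n}"]) auto
  have "{e. \<not> good k e} \<subseteq> (\<Union>X\<in>Xs. few X)"
    unfolding good_def Xs_def few_def n_def s_def by force
  then have "measure_pmf.prob (Hk k) {e. \<not> good k e} \<le> measure_pmf.prob (Hk k) (\<Union>X\<in>Xs. few X)"
    by (intro measure_pmf.finite_measure_mono) auto
  also have "\<dots> \<le> (\<Sum>X\<in>Xs. measure_pmf.prob (Hk k) (few X))"
    using \<open>finite Xs\<close> by (intro measure_pmf.finite_measure_subadditive_finite) auto
  also have "\<dots> \<le> (\<Sum>X\<in>Xs. exp ((ln (real k))^9 / 2 - real k * exp (- real k * s / (n - real k - s)) / 2))"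
  proof (rule sum_mono)
    fix X assume "X \<in> Xs"
    then show "measure_pmf.prob (Hk k) (few X)
        \<le> exp ((ln (real k))^9 / 2 - real k * exp (- real k * s / (n - real k - s)) / 2)"
      using prob_Hk_few_disjoint_le[of X k "(ln (real k))^9 / 2"] assms unfolding Xs_def few_def n_def s_def by auto
  qed
  also have "\<dots> = real (n choose s) * exp ((ln (real k))^9 / 2 - real k * exp (- real k * s / (n - real k - s)) / 2)"
    using n_subsets[of "{1..n}" s] by (simp add: Xs_def)
  finally show ?thesis .
qed

lemma prob_good_ge:
  fixes k :: nat
  defines "L \<equiv> ln (real k)"
  defines "\<sigma> \<equiv> L^2 - 10 * L * ln L"
  assumes "1 \<le> \<sigma>" "0 < real k * L - real k - \<sigma>"
  shows "1 - exp (\<sigma> * ln (real k * L + 1) + L^9 / 2 - real k * exp (- real k * \<sigma> / (real k * L - real k - \<sigma>)) / 2)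
       \<le> measure_pmf.prob (Hk k) {e. good k e}"
proof -
  define n where "n = nverts k"
  define s where "s = xsize k"
  have s: "1 \<le> s" "real s \<le> \<sigma>"
    using assms(3) unfolding s_def xsize_def \<sigma>_def L_def by linarith+
  have "0 \<le> real k * L" using assms by linarith
  then have n: "real k * L \<le> real n" "real n \<le> real k * L + 1"
    unfolding n_def nverts_def L_def by linarith+
  have sk: "real s + real k < real n" using s n assms(4) by linarith
  have "real (n choose s) \<le> exp (real s * ln (real n))"
    using sk by (intro binomial_le_exp_mult_ln) auto
  also have "\<dots> \<le> exp (\<sigma> * ln (real k * L + 1))"
  proof -
    have "real s * ln (real n) \<le> \<sigma> * ln (real n)" using s sk by (intro mult_right_mono) auto
    also have "\<dots> \<le> \<sigma> * ln (real k * L + 1)" using n s sk by (intro mult_left_mono) auto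
    finally show ?thesis by simp
  qed
  finally have card_le: "real (n choose s) \<le> exp (\<sigma> * ln (real k * L + 1))" .
  have "real k * s / (n - real k - s) \<le> real k * \<sigma> / (real k * L - real k - \<sigma>)"
    using s n sk assms(4) by (intro mult_left_mono frac_le) auto
  then have "real k * exp (- real k * \<sigma> / (real k * L - real k - \<sigma>))
      \<le> real k * exp (- real k * s / (n - real k - s))"
    by (intro mult_left_mono) auto
  then have edges_le: "exp (L^9 / 2 - real k * exp (- real k * s / (n - real k - s)) / 2)
      \<le> exp (L^9 / 2 - real k * exp (- real k * \<sigma> / (real k * L - real k - \<sigma>)) / 2)"
    by simp
  have "measure_pmf.prob (Hk k) {e. \<not> good k e}
      \<le> real (n choose s) * exp (L^9 / 2 - real k * exp (- real k * s / (n - real k - s)) / 2)"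
    using prob_not_good_le[of k] sk unfolding n_def s_def L_def by linarith
  also have "\<dots> \<le> exp (\<sigma> * ln (real k * L + 1))
      * exp (L^9 / 2 - real k * exp (- real k * \<sigma> / (real k * L - real k - \<sigma>)) / 2)"
    using card_le edges_le by (intro mult_mono) auto
  also have "\<dots> = exp (\<sigma> * ln (real k * L + 1) + L^9 / 2
      - real k * exp (- real k * \<sigma> / (real k * L - real k - \<sigma>)) / 2)"
    by (simp add: exp_add[symmetric] add_diff_eq)
  finally have "measure_pmf.prob (Hk k) {e. \<not> good k e} \<le> \<dots>" .
  then show ?thesis by (simp add: prob_pmf_Collect_not)
qed

theorem lemma1:
  shows "(\<lambda>k. measure_pmf.prob (Hk k) {e. good k e}) \<longlonglongrightarrow> 1"
proof (rule tendsto_sandwich[OF _ _ _ tendsto_const])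
  let ?L = "\<lambda>k::nat. ln (real k)"
  let ?\<sigma> = "\<lambda>k. ?L k ^ 2 - 10 * ?L k * ln (?L k)"
  let ?b = "\<lambda>k. 1 - exp (?\<sigma> k * ln (real k * ?L k + 1) + ?L k ^ 9 / 2
      - real k * exp (- real k * ?\<sigma> k / (real k * ?L k - real k - ?\<sigma> k)) / 2)"
  have "eventually (\<lambda>k. 1 \<le> ?\<sigma> k) sequentially"
    and "eventually (\<lambda>k. 0 < real k * ?L k - real k - ?\<sigma> k) sequentially"
    by real_asymp+
  then show "eventually (\<lambda>k. ?b k \<le> measure_pmf.prob (Hk k) {e. good k e}) sequentially"
    by eventually_elim (use prob_good_ge in blast)
  show "?b \<longlonglongrightarrow> 1" by real_asymp
qed auto

end
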